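(* Every $2$-dimensional real Banach space has the $\mathbf{L}_{p,p}$-nu.
   Context: For a Banach space $X$: $\Pi(X)=\{(x,x^* )\in S_X\times S_{X^*}: x^*(x)=1\}$; for $T\in\mathcal{L}(X)$ (bounded linear operators on $X$), $v(T)=\sup\{|x^*(Tx)|:(x,x^* )\in\Pi(X)\}$. $X$ has the $\mathbf{L}_{p,p}$-nu if for every $\varepsilon>0$ and $(x,x^* )\in\Pi(X)$ there is $\eta(\varepsilon,(x,x^* ))>0$ such that whenever $T\in\mathcal{L}(X)$ with $v(T)=1$ satisfies $|x^*(Tx)|>1-\eta(\varepsilon,(x,x^* ))$, there is $S\in\mathcal{L}(X)$ with $v(S)=1$, $|x^*(Sx)|=1$ and $\|S-T\|<\varepsilon$. *)

theory Defs
  imports "HOL-Analysis.Analysis"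
begin

definition state_pairs :: "('a::real_normed_vector \<times> ('a \<Rightarrow>\<^sub>L real)) set" where
  "state_pairs = {(x, f). norm x = 1 \<and> norm f = 1 \<and> blinfun_apply f x = 1}"

definition numrad :: "('a::real_normed_vector \<Rightarrow>\<^sub>L 'a) \<Rightarrow> real" where
  "numrad T = (SUP p \<in> state_pairs. \<bar>blinfun_apply (snd p) (blinfun_apply T (fst p))\<bar>)"

definition Lpp_nu :: "'a::real_normed_vector itself \<Rightarrow> bool" where
  "Lpp_nu _ \<longleftrightarrow>
    (\<forall>\<epsilon>>0. \<forall>x f. (x, f) \<in> (state_pairs :: ('a \<times> ('a \<Rightarrow>\<^sub>L real)) set) \<longrightarrow>
      (\<exists>\<eta>>0. \<forall>T :: 'a \<Rightarrow>\<^sub>L 'a.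
         numrad T = 1 \<and> \<bar>blinfun_apply f (blinfun_apply T x)\<bar> > 1 - \<eta> \<longrightarrow>
         (\<exists>S :: 'a \<Rightarrow>\<^sub>L 'a. numrad S = 1 \<and> \<bar>blinfun_apply f (blinfun_apply S x)\<bar> = 1
              \<and> norm (S - T) < \<epsilon>)))"

end

theory Submission
  imports Defs
begin

text \<open>On a finite-dimensional space the numerical radius \<open>v\<close> is a continuous seminorm on the
  operators, and \<open>T \<mapsto> x\<^sup>*(T x)\<close> is a linear functional dominated by it. Modulo the kernel of \<open>v\<close>
  the set \<open>{v = 1}\<close> is compact, so an operator with \<open>v(T) = 1\<close> and \<open>|x\<^sup>*(T x)|\<close> close to 1 is,
  up to a kernel element, close to one where \<open>|x\<^sup>*(S x)| = 1\<close>; adding the kernel element back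
  changes neither \<open>v\<close> nor \<open>x\<^sup>*(\<cdot> x)\<close>.\<close>

lemma abs_apply_le_norm_of_state_pair:
  fixes T :: "'a::real_normed_vector \<Rightarrow>\<^sub>L 'a"
  assumes "(x, f) \<in> state_pairs"
  shows "\<bar>f (T x)\<bar> \<le> norm T"
proof -
  have "\<bar>f (T x)\<bar> \<le> norm f * norm (T x)"
    using norm_blinfun[of f "T x"] by simp
  also have "\<dots> \<le> norm T"
    using norm_blinfun[of T x] assms by (simp add: state_pairs_def)
  finally show ?thesis .
qed

lemma bdd_above_numrad:
  fixes T :: "'a::real_normed_vector \<Rightarrow>\<^sub>L 'a"
  shows "bdd_above ((\<lambda>p. \<bar>blinfun_apply (snd p) (T (fst p))\<bar>) ` state_pairs)"
  by (rule bdd_aboveI2[of _ _ "norm T"]) (auto intro: abs_apply_le_norm_of_state_pair)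

lemma abs_apply_le_numrad:
  fixes T :: "'a::real_normed_vector \<Rightarrow>\<^sub>L 'a"
  assumes "(x, f) \<in> state_pairs"
  shows "\<bar>f (T x)\<bar> \<le> numrad T"
  using cSUP_upper[OF assms bdd_above_numrad[of T]] by (simp add: numrad_def)

context
  assumes state_pairs_nonempty: "(state_pairs :: ('a::real_normed_vector \<times> ('a \<Rightarrow>\<^sub>L real)) set) \<noteq> {}"
begin

lemma numrad_le_norm: "numrad (T :: 'a \<Rightarrow>\<^sub>L 'a) \<le> norm T"
  unfolding numrad_def
  by (rule cSUP_least[OF state_pairs_nonempty]) (auto intro: abs_apply_le_norm_of_state_pair)

lemma numrad_nonneg: "0 \<le> numrad (T :: 'a \<Rightarrow>\<^sub>L 'a)"
proof -
  obtain x f where "(x, f) \<in> (state_pairs :: ('a \<times> ('a \<Rightarrow>\<^sub>L real)) set)"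
    using state_pairs_nonempty by auto
  from abs_apply_le_numrad[OF this, of T] show ?thesis by linarith
qed

lemma numrad_add_le: "numrad (A + B :: 'a \<Rightarrow>\<^sub>L 'a) \<le> numrad A + numrad B"
  unfolding numrad_def[of "A + B"]
proof (rule cSUP_least[OF state_pairs_nonempty], clarify)
  fix x :: 'a and f :: "'a \<Rightarrow>\<^sub>L real"
  assume xf: "(x, f) \<in> state_pairs"
  have "\<bar>f ((A + B) x)\<bar> \<le> \<bar>f (A x)\<bar> + \<bar>f (B x)\<bar>"
    by (simp add: blinfun.add_left blinfun.add_right)
  also have "\<dots> \<le> numrad A + numrad B"
    using abs_apply_le_numrad[OF xf] by (intro add_mono)
  finally show "\<bar>blinfun_apply (snd (x, f)) ((A + B) (fst (x, f)))\<bar> \<le> numrad A + numrad B" by simp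
qed

lemma numrad_scaleR: "numrad (t *\<^sub>R A :: 'a \<Rightarrow>\<^sub>L 'a) = \<bar>t\<bar> * numrad A"
proof -
  have le: "numrad (s *\<^sub>R B) \<le> \<bar>s\<bar> * numrad B" for s and B :: "'a \<Rightarrow>\<^sub>L 'a"
    unfolding numrad_def[of "s *\<^sub>R B"]
  proof (rule cSUP_least[OF state_pairs_nonempty], clarify)
    fix x :: 'a and f :: "'a \<Rightarrow>\<^sub>L real"
    assume "(x, f) \<in> state_pairs"
    then have "\<bar>s\<bar> * \<bar>f (B x)\<bar> \<le> \<bar>s\<bar> * numrad B"
      by (intro mult_left_mono abs_apply_le_numrad) auto
    then show "\<bar>blinfun_apply (snd (x, f)) ((s *\<^sub>R B) (fst (x, f)))\<bar> \<le> \<bar>s\<bar> * numrad B"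
      by (simp add: blinfun.scaleR_left blinfun.scaleR_right abs_mult)
  qed
  show ?thesis
  proof (cases "t = 0")
    case True
    then show ?thesis using le[of t A] numrad_nonneg[of "t *\<^sub>R A"] by simp
  next
    case False
    have "\<bar>t\<bar> * numrad A = \<bar>t\<bar> * numrad (inverse t *\<^sub>R (t *\<^sub>R A))"
      using False by simp
    also have "\<dots> \<le> numrad (t *\<^sub>R A)"
      using le[of "inverse t" "t *\<^sub>R A"] False by (simp add: abs_inverse field_simps)
    finally show ?thesis using le[of t A] by linarith
  qed
qed

lemma lipschitz_on_numrad: "1-lipschitz_on UNIV (numrad :: ('a \<Rightarrow>\<^sub>L 'a) \<Rightarrow> real)"
proof (rule lipschitz_onI)
  fix A B :: "'a \<Rightarrow>\<^sub>L 'a"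
  have "numrad A \<le> numrad B + norm (A - B)" "numrad B \<le> numrad A + norm (A - B)"
    using numrad_add_le[of B "A - B"] numrad_le_norm[of "A - B"]
      numrad_add_le[of A "B - A"] numrad_le_norm[of "B - A"] norm_minus_commute[of A B]
    by (simp_all add: algebra_simps)
  then show "dist (numrad A) (numrad B) \<le> 1 * dist A B"
    by (simp add: dist_real_def dist_norm abs_le_iff)
qed simp

end

lemma homogeneous_ge_norm_on_cone:
  fixes w :: "'e::{real_normed_vector,heine_borel} \<Rightarrow> real"
  assumes "closed K" and "continuous_on UNIV w"
    and hom: "\<And>t z. w (t *\<^sub>R z) = \<bar>t\<bar> * w z"
    and cone: "\<And>t z. z \<in> K \<Longrightarrow> t *\<^sub>R z \<in> K"
    and pos: "\<And>z. z \<in> K \<Longrightarrow> z \<noteq> 0 \<Longrightarrow> w z > 0"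
  obtains c where "c > 0" "\<And>z. z \<in> K \<Longrightarrow> c * norm z \<le> w z"
proof (cases "K \<inter> {z. norm z = 1} = {}")
  case True
  have "z = 0" if "z \<in> K" for z
  proof (rule ccontr)
    assume "z \<noteq> 0"
    then have "inverse (norm z) *\<^sub>R z \<in> K \<inter> {z. norm z = 1}"
      using cone[OF that] by simp
    with True show False by blast
  qed
  with hom[of 0 0] show ?thesis by (intro that[of 1]) fastforce+
next
  case False
  have "bounded (K \<inter> {z. norm z = 1})"
    by (rule bounded_subset[OF bounded_cball[of 0 1]]) auto
  moreover have "closed (K \<inter> {z. norm z = 1})"
    by (intro closed_Int \<open>closed K\<close> closed_Collect_eq continuous_intros)
  ultimately have "compact (K \<inter> {z. norm z = 1})"
    by (simp add: compact_eq_bounded_closed)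
  then obtain u where u: "u \<in> K \<inter> {z. norm z = 1}"
    "\<And>v. v \<in> K \<inter> {z. norm z = 1} \<Longrightarrow> w u \<le> w v"
    using continuous_attains_inf[OF _ False continuous_on_subset[OF assms(2)]] by blast
  show ?thesis
  proof (rule that[of "w u"])
    show "w u > 0" using u(1) pos[of u] by force
    show "w u * norm z \<le> w z" if "z \<in> K" for z
    proof (cases "z = 0")
      case True
      then show ?thesis using hom[of 0 0] by simp
    next
      case False
      have "w u \<le> w (inverse (norm z) *\<^sub>R z)"
        using u(2) cone[OF that] False by simp
      then have "norm z * w u \<le> norm z * w (inverse (norm z) *\<^sub>R z)"
        by (simp add: mult_left_mono)
      also have "\<dots> = w z"
        using hom[of "inverse (norm z)" z] False by simp
      finally show ?thesis by (simp add: mult.commute)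
    qed
  qed
qed

lemma compact_near_maximum:
  fixes g :: "'e::metric_space \<Rightarrow> real"
  assumes "compact C" and "continuous_on C g" and le1: "\<And>p. p \<in> C \<Longrightarrow> g p \<le> 1" and "\<epsilon> > 0"
  obtains \<eta> where "\<eta> > 0"
    "\<And>p. p \<in> C \<Longrightarrow> g p > 1 - \<eta> \<Longrightarrow> \<exists>a\<in>C. g a = 1 \<and> dist p a < \<epsilon>"
proof -
  define F where "F = C \<inter> (\<Inter>a\<in>{a\<in>C. g a = 1}. {p. \<epsilon> \<le> dist p a})"
  have "compact F"
    unfolding F_def
    by (intro compact_Int_closed \<open>compact C\<close> closed_INT ballI closed_Collect_le continuous_intros)
  have F_lt1: "g p < 1" if "p \<in> F" for p
  proof (rule ccontr)
    assume "\<not> g p < 1"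
    then have "p \<in> {a\<in>C. g a = 1}"
      using that le1[of p] by (simp add: F_def)
    then have "\<epsilon> \<le> dist p p"
      using that unfolding F_def by blast
    then show False using \<open>\<epsilon> > 0\<close> by simp
  qed
  obtain \<eta> where "\<eta> > 0" and \<eta>: "\<And>p. p \<in> F \<Longrightarrow> g p \<le> 1 - \<eta>"
  proof (cases "F = {}")
    case True
    then show ?thesis by (intro that[of 1]) auto
  next
    case False
    have "continuous_on F g"
      using assms(2) by (rule continuous_on_subset) (simp add: F_def)
    then obtain q where "q \<in> F" "\<And>p. p \<in> F \<Longrightarrow> g p \<le> g q"
      using continuous_attains_sup[OF \<open>compact F\<close> False] by blast
    then show ?thesis using F_lt1 by (intro that[of "1 - g q"]) auto
  qed
  show ?thesis
  proof (rule that[OF \<open>\<eta> > 0\<close>])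
    fix p assume "p \<in> C" "g p > 1 - \<eta>"
    then have "p \<notin> F" using \<eta> by force
    with \<open>p \<in> C\<close> show "\<exists>a\<in>C. g a = 1 \<and> dist p a < \<epsilon>"
      by (auto simp: F_def not_le)
  qed
qed

lemma seminorm_kernel_complement:
  fixes w :: "'e::{real_normed_vector,heine_borel} \<Rightarrow> real"
  assumes add: "\<And>a b. w (a + b) \<le> w a + w b"
    and hom: "\<And>t a. w (t *\<^sub>R a) = \<bar>t\<bar> * w a"
    and cont: "continuous_on UNIV w"
  obtains K where "closed K" "\<And>t p. p \<in> K \<Longrightarrow> t *\<^sub>R p \<in> K"
    "\<And>p. p \<in> K \<Longrightarrow> p \<noteq> 0 \<Longrightarrow> w p > 0" "\<And>m. \<exists>p\<in>K. w (m - p) = 0"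
proof -
  define Z where "Z = {m. w m = 0}"
  have nonneg: "0 \<le> w a" for a
    using add[of a "-a"] hom[of 0 a] hom[of "-1" a] by simp
  have "closed Z"
    unfolding Z_def by (intro closed_Collect_eq cont continuous_intros)
  have Z_add: "a + b \<in> Z" if "a \<in> Z" "b \<in> Z" for a b
    using that add[of a b] nonneg[of "a + b"] by (simp add: Z_def)
  have Z_scale: "t *\<^sub>R a \<in> Z" if "a \<in> Z" for t a
    using that hom[of t a] by (simp add: Z_def)
  \<comment> \<open>the points whose nearest point in \<open>Z\<close> is \<open>0\<close>; this cone stands in for the quotient by \<open>Z\<close>\<close>
  define K where "K = (\<Inter>z\<in>Z. {p. norm p \<le> norm (p - z)})"
  show ?thesis
  proof
    show "closed K"
      unfolding K_def by (intro closed_INT ballI closed_Collect_le continuous_intros)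
  next
    fix t p assume "p \<in> K"
    show "t *\<^sub>R p \<in> K"
    proof (cases "t = 0")
      case False
      have "norm (t *\<^sub>R p) \<le> norm (t *\<^sub>R p - z)" if "z \<in> Z" for z
      proof -
        have "\<bar>t\<bar> * norm p \<le> \<bar>t\<bar> * norm (p - inverse t *\<^sub>R z)"
          using \<open>p \<in> K\<close> Z_scale[OF that] by (auto simp: K_def intro: mult_left_mono)
        also have "\<dots> = norm (t *\<^sub>R p - z)"
          using False by (simp flip: norm_scaleR add: scaleR_diff_right)
        finally show ?thesis by simp
      qed
      then show ?thesis by (simp add: K_def)
    qed (simp add: K_def)
  next
    fix p assume "p \<in> K" "p \<noteq> 0"
    show "w p > 0"
    proof (rule ccontr)
      assume "\<not> w p > 0"
      then have "p \<in> Z" using nonneg[of p] by (simp add: Z_def)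
      then show False using \<open>p \<in> K\<close> \<open>p \<noteq> 0\<close> by (auto simp: K_def)
    qed
  next
    fix m
    have "0 \<in> Z" using hom[of 0 0] by (simp add: Z_def)
    then obtain y where "y \<in> Z" and y: "\<And>z. z \<in> Z \<Longrightarrow> dist m y \<le> dist m z"
      using distance_attains_inf[OF \<open>closed Z\<close>] by blast
    have "m - y \<in> K"
      using y Z_add[OF \<open>y \<in> Z\<close>] by (force simp: K_def dist_norm algebra_simps)
    with \<open>y \<in> Z\<close> show "\<exists>p\<in>K. w (m - p) = 0" by (intro bexI[of _ "m - y"]) (auto simp: Z_def)
  qed
qed

lemma approx_by_seminorm_attaining:
  fixes w :: "'e::{real_normed_vector,heine_borel} \<Rightarrow> real" and \<phi> :: "'e \<Rightarrow> real"
  assumes add: "\<And>a b. w (a + b) \<le> w a + w b"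
    and hom: "\<And>t a. w (t *\<^sub>R a) = \<bar>t\<bar> * w a"
    and cont: "continuous_on UNIV w"
    and "bounded_linear \<phi>" and dominated: "\<And>m. \<bar>\<phi> m\<bar> \<le> w m"
    and "\<epsilon> > 0"
  obtains \<eta> where "\<eta> > 0"
    "\<And>m. w m = 1 \<Longrightarrow> \<bar>\<phi> m\<bar> > 1 - \<eta> \<Longrightarrow> \<exists>m'. w m' = 1 \<and> \<bar>\<phi> m'\<bar> = 1 \<and> norm (m' - m) < \<epsilon>"
proof -
  interpret \<phi>: bounded_linear \<phi> by fact
  obtain K where "closed K" and cone: "\<And>t p. p \<in> K \<Longrightarrow> t *\<^sub>R p \<in> K"
    and pos: "\<And>p. p \<in> K \<Longrightarrow> p \<noteq> 0 \<Longrightarrow> w p > 0" and decomp: "\<And>m. \<exists>p\<in>K. w (m - p) = 0"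
    using seminorm_kernel_complement[OF add hom cont] by blast
  obtain c where "c > 0" and c: "\<And>p. p \<in> K \<Longrightarrow> c * norm p \<le> w p"
    using homogeneous_ge_norm_on_cone[OF \<open>closed K\<close> cont hom cone pos] by blast
  have shift: "w (a + z) = w a" "\<phi> (a + z) = \<phi> a" if "w z = 0" for a z
  proof -
    show "w (a + z) = w a"
      using add[of a z] add[of "a + z" "-z"] hom[of "-1" z] that by simp
    show "\<phi> (a + z) = \<phi> a"
      using dominated[of z] that by (simp add: \<phi>.add)
  qed
  define C where "C = K \<inter> {p. w p = 1}"
  have "C \<subseteq> cball 0 (1 / c)"
  proof
    fix p assume "p \<in> C"
    then have "c * norm p \<le> 1" using c[of p] by (simp add: C_def)
    with \<open>c > 0\<close> show "p \<in> cball 0 (1 / c)" by (simp add: field_simps)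
  qed
  then have "bounded C" by (rule bounded_subset[OF bounded_cball])
  moreover have "closed C"
    unfolding C_def by (intro closed_Int \<open>closed K\<close> closed_Collect_eq cont continuous_intros)
  ultimately have "compact C"
    by (simp add: compact_eq_bounded_closed)
  moreover have "continuous_on C (\<lambda>p. \<bar>\<phi> p\<bar>)"
    by (intro continuous_intros \<phi>.continuous_on)
  moreover have "\<bar>\<phi> p\<bar> \<le> 1" if "p \<in> C" for p
    using dominated[of p] that by (simp add: C_def)
  ultimately obtain \<eta> where "\<eta> > 0" and \<eta>:
    "\<And>p. p \<in> C \<Longrightarrow> \<bar>\<phi> p\<bar> > 1 - \<eta> \<Longrightarrow> \<exists>a\<in>C. \<bar>\<phi> a\<bar> = 1 \<and> dist p a < \<epsilon>"
    using compact_near_maximum[OF _ _ _ \<open>\<epsilon> > 0\<close>] by blast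
  show ?thesis
  proof (rule that[OF \<open>\<eta> > 0\<close>])
    fix m assume m: "w m = 1" "\<bar>\<phi> m\<bar> > 1 - \<eta>"
    obtain p where "p \<in> K" and y: "w (m - p) = 0"
      using decomp by blast
    have "w p = 1" "\<bar>\<phi> p\<bar> > 1 - \<eta>"
      using m shift[OF y, of p] by simp_all
    then obtain a where "a \<in> C" "\<bar>\<phi> a\<bar> = 1" "dist p a < \<epsilon>"
      using \<eta> \<open>p \<in> K\<close> by (auto simp: C_def)
    then show "\<exists>m'. w m' = 1 \<and> \<bar>\<phi> m'\<bar> = 1 \<and> norm (m' - m) < \<epsilon>"
      using shift[OF y, of a]
      by (intro exI[of _ "a + (m - p)"]) (auto simp: C_def dist_norm norm_minus_commute)
  qed
qed

lemma Lpp_nu_if_operators_parametrized: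
  fixes \<Phi> :: "'e::{real_normed_vector,heine_borel} \<Rightarrow> ('a::real_normed_vector \<Rightarrow>\<^sub>L 'a)"
  assumes "bounded_linear \<Phi>" and "surj \<Phi>"
  shows "Lpp_nu TYPE('a)"
  unfolding Lpp_nu_def
proof (intro allI impI)
  fix \<epsilon> :: real and x :: 'a and f :: "'a \<Rightarrow>\<^sub>L real"
  assume "\<epsilon> > 0" and xf: "(x, f) \<in> state_pairs"
  interpret \<Phi>: bounded_linear \<Phi> by fact
  have ne: "(state_pairs :: ('a \<times> ('a \<Rightarrow>\<^sub>L real)) set) \<noteq> {}"
    using xf by blast
  obtain B where "B > 0" and B: "\<And>m. norm (\<Phi> m) \<le> norm m * B"
    using \<Phi>.pos_bounded by blast
  have "continuous_on UNIV (\<lambda>m. numrad (\<Phi> m))"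
    using lipschitz_on_continuous_on[OF lipschitz_on_numrad[OF ne]]
    by (intro continuous_on_compose2[OF _ \<Phi>.continuous_on]) auto
  moreover have "bounded_linear (\<lambda>m. f (\<Phi> m x))"
    by (intro bounded_linear_blinfun_apply bounded_linear_compose[OF blinfun.bounded_linear_left]
        \<Phi>.bounded_linear_axioms)
  ultimately obtain \<eta> where "\<eta> > 0" and \<eta>: "\<And>m. numrad (\<Phi> m) = 1 \<Longrightarrow> \<bar>f (\<Phi> m x)\<bar> > 1 - \<eta> \<Longrightarrow>
      \<exists>m'. numrad (\<Phi> m') = 1 \<and> \<bar>f (\<Phi> m' x)\<bar> = 1 \<and> norm (m' - m) < \<epsilon> / B"
    using approx_by_seminorm_attaining[of "\<lambda>m. numrad (\<Phi> m)" "\<lambda>m. f (\<Phi> m x)" "\<epsilon> / B"]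
      numrad_add_le[OF ne] numrad_scaleR[OF ne] abs_apply_le_numrad[OF xf] \<open>\<epsilon> > 0\<close> \<open>B > 0\<close>
    by (auto simp: \<Phi>.add \<Phi>.scaleR)
  show "\<exists>\<eta>>0. \<forall>T. numrad T = 1 \<and> \<bar>f (T x)\<bar> > 1 - \<eta> \<longrightarrow>
      (\<exists>S. numrad S = 1 \<and> \<bar>f (S x)\<bar> = 1 \<and> norm (S - T) < \<epsilon>)"
  proof (intro exI[of _ \<eta>] conjI allI impI \<open>\<eta> > 0\<close>)
    fix T assume T: "numrad T = 1 \<and> \<bar>f (T x)\<bar> > 1 - \<eta>"
    obtain m where m: "T = \<Phi> m"
      using \<open>surj \<Phi>\<close> by (metis surj_f_inv_f)
    then obtain m' where m': "numrad (\<Phi> m') = 1" "\<bar>f (\<Phi> m' x)\<bar> = 1" "norm (m' - m) < \<epsilon> / B"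
      using \<eta> T by blast
    have "norm (\<Phi> m' - T) \<le> norm (m' - m) * B"
      using B[of "m' - m"] by (simp add: m \<Phi>.diff)
    also have "\<dots> < \<epsilon>"
      using m'(3) \<open>B > 0\<close> by (simp add: field_simps)
    finally show "\<exists>S. numrad S = 1 \<and> \<bar>f (S x)\<bar> = 1 \<and> norm (S - T) < \<epsilon>"
      using m' by blast
  qed
qed

lemma exists_blinfun_retraction_of_euclidean:
  assumes "dim (UNIV :: 'a::real_normed_vector set) = DIM('e::euclidean_space)"
  obtains L :: "'e::euclidean_space \<Rightarrow>\<^sub>L 'a::real_normed_vector" and G :: "'a \<Rightarrow>\<^sub>L 'e"
  where "\<And>x. L (G x) = x"
proof -
  obtain C :: "'a set"
    where C: "C \<subseteq> UNIV" "independent C" "UNIV \<subseteq> span C" "card C = dim (UNIV :: 'a set)"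
    by (rule basis_exists)
  \<comment> \<open>an infinite set has \<open>card\<close> 0, while \<open>DIM('e) > 0\<close>\<close>
  have "finite C"
    using C(4) assms by (simp add: card_ge_0_finite)
  have "\<exists>l :: 'e \<Rightarrow> 'a. linear l \<and> l ` Basis = C \<and> l ` UNIV = UNIV \<and> inj_on l UNIV"
    by (rule real_vector.finite_basis_to_basis_subspace_isomorphism)
      (simp_all add: C assms \<open>finite C\<close> independent_Basis)
  then obtain l :: "'e \<Rightarrow> 'a" where "linear l" "l ` UNIV = UNIV" "inj_on l UNIV"
    by blast
  then have "surj l" "inj l" "bounded_linear l"
    by (simp_all add: linear_conv_bounded_linear)
  have cont: "continuous_on UNIV (\<lambda>v. norm (l v))"
    by (intro continuous_intros linear_continuous_on \<open>bounded_linear l\<close>)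
  have hom: "norm (l (t *\<^sub>R v)) = \<bar>t\<bar> * norm (l v)" for t v
    by (simp add: linear_scale[OF \<open>linear l\<close>])
  have pos: "norm (l v) > 0" if "v \<noteq> 0" for v
    using \<open>inj l\<close> linear_0[OF \<open>linear l\<close>] that by (auto simp: inj_eq[symmetric])
  from homogeneous_ge_norm_on_cone[OF closed_UNIV cont hom _ pos]
  obtain c where "c > 0" and c: "\<And>v. c * norm v \<le> norm (l v)"
    by auto
  obtain g where "linear g" and lg: "l \<circ> g = id"
    using linear_surjective_right_inverse[OF \<open>linear l\<close> \<open>surj l\<close>] by blast
  have "bounded_linear g"
  proof (rule bounded_linear_intro[of _ "inverse c"])
    show "g (a + b) = g a + g b" "g (r *\<^sub>R a) = r *\<^sub>R g a" for a b r
      using \<open>linear g\<close> by (simp_all add: linear_add linear_scale)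
    show "norm (g a) \<le> norm a * inverse c" for a
      using c[of "g a"] lg \<open>c > 0\<close> by (simp add: pointfree_idE field_simps)
  qed
  with \<open>bounded_linear l\<close> show ?thesis
    using lg by (intro that[of "Blinfun l" "Blinfun g"])
      (simp add: bounded_linear_Blinfun_apply pointfree_idE)
qed

theorem Lpp_nu_if_dim_eq_DIM:
  assumes "dim (UNIV :: 'a::real_normed_vector set) = DIM('e::euclidean_space)"
  shows "Lpp_nu TYPE('a)"
proof -
  obtain L :: "'e \<Rightarrow>\<^sub>L 'a" and G :: "'a \<Rightarrow>\<^sub>L 'e" where LG: "\<And>x. L (G x) = x"
    using exists_blinfun_retraction_of_euclidean[OF assms] by metis
  interpret compose: bounded_bilinear "(o\<^sub>L)"
    by (rule bounded_bilinear_blinfun_compose)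
  have "bounded_linear (\<lambda>A :: 'e \<Rightarrow>\<^sub>L 'e. L o\<^sub>L A o\<^sub>L G)"
    by (rule bounded_linear_compose[OF compose.bounded_linear_left compose.bounded_linear_right])
  moreover have "surj (\<lambda>A :: 'e \<Rightarrow>\<^sub>L 'e. L o\<^sub>L A o\<^sub>L G)"
  proof (rule surjI)
    show "L o\<^sub>L (G o\<^sub>L T o\<^sub>L L) o\<^sub>L G = T" for T :: "'a \<Rightarrow>\<^sub>L 'a"
      by (rule blinfun_eqI) (simp add: LG)
  qed
  ultimately show ?thesis
    by (rule Lpp_nu_if_operators_parametrized)
qed

theorem mainTheorem9:
  assumes "dim (UNIV :: 'a::banach set) = 2"
  shows "Lpp_nu TYPE('a)"
  using assms by (intro Lpp_nu_if_dim_eq_DIM[where 'e = "real \<times> real"]) simp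

end
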